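(* Let $(\Omega,\{\Omega_m\}_{m\ge1},\rho,\mu)$ be a locally homogeneous space and fix $n\ge1$. Let $\Delta_{n+1}=\{Q^k_\alpha\}$ be the family of dyadic cubes subordinated to $\Omega_{n+1}$, with constants $a_0,c_0,c_1,c_2,\delta$, as described in the context. Then for every positive integer $k$ large enough, the set $\Omega_n$ is covered, up to a set of $\mu$-measure zero, by a finite union of dyadic cubes $Q^k_\alpha\in\Delta_{n+1}$ of generation $k$ with the following properties: (i) $Q^k_\alpha\subset B(z^k_\alpha,c_1\delta^k)\subset\Omega_{n+1}$; (ii) there is a set $F^k_\alpha$ which is a finite union of dyadic cubes $Q^k_{\beta}\in\Delta_{n+1}$ of generation $k$, such that $B(z^k_\alpha,c_1\delta^k)\subset F^k_\alpha$ up to a set of measure zero and $F^k_\alpha\subset B(z^k_\alpha,c'\delta^k)\subset\Omega_{n+1}$ (for a constant $c'$ independent of $k$); moreover $F^k_\alpha$ is a space of homogeneous type, i.e. there is a constant $c$ with $\mu(B(x,2r)\cap F^k_\alpha)\le c\,\mu(B(x,r)\cap F^k_\alpha)$ for a.e. $x\in F^k_\alpha$ and all $r>0$.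
   Context: A locally homogeneous space $(\Omega,\{\Omega_m\},\rho,\mu)$ consists of: a set $\Omega$ and $\rho:\Omega\times\Omega\to[0,\infty)$ with $\rho(x,y)=0\iff x=y$ and $\rho(x,y)=\rho(y,x)$; balls $B(x,r)=\{y\in\Omega:\rho(x,y)<r\}$; the topology in which $A$ is open iff every $x\in A$ has some $B(x,r)\subset A$; a set is bounded if contained in some ball; it is assumed that the balls are open and the closure of $B(x,r)$ is contained in $\{y:\rho(x,y)\le r\}$ (equivalently, $\rho(\cdot,y)$ is continuous for each $y$); $\mu$ is a positive regular Borel measure on $\Omega$; $\{\Omega_m\}_{m\ge1}$ is an increasing sequence of bounded measurable sets with $\bigcup_m\Omega_m=\Omega$ such that for every $m$: the closure of $\Omega_m$ is compact; there is $\varepsilon_m>0$ with $\{x\in\Omega:\rho(x,y)<2\varepsilon_m\text{ for some }y\in\Omega_m\}\subset\Omega_{m+1}$; there is $B_m\ge1$ with $\rho(x,y)\le B_m(\rho(x,z)+\rho(z,y))$ for all $x,y,z\in\Omega_m$; there is $C_m>1$ with $0<\mu(B(x,2r))\le C_m\mu(B(x,r))<\infty$ for all $x\in\Omega_m$, $0<r\le\varepsilon_m$. Dyadic cubes (construction of Bramanti–Zhu): for each $N$ there is a collection $\Delta_N=\{Q^k_\alpha:k=1,2,\dots,\alpha\in I_k\}$ of open sets ("dyadic cubes subordinated to $\Omega_N$", $Q^k_\alpha$ of generation $k$), constants $a_0,c_0,c_1,c_2>0$, $\delta\in(0,1)$ with $c_1\delta<2\varepsilon_{N+1}$, and a set $E\subset\Omega_N$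 with $\mu(E)=0$, such that for every $k\ge1$: (a) each $Q^k_\alpha$ contains a ball $B(z^k_\alpha,a_0\delta^k)$; (b) $\bigcup_\alpha Q^k_\alpha\subset\Omega_{N+1}$; (c) for $1\le l\le k$ there is $Q^l_\beta\supseteq Q^k_\alpha$; (d) $\mathrm{diam}(Q^k_\alpha)<c_1\delta^k$ and $\overline{Q^k_\alpha}\subset B(z^k_\alpha,c_1\delta^k)\subset\Omega_{N+2}$; (e) if $l\ge k$ then either $Q^l_\beta\subset Q^k_\alpha$ or $Q^l_\beta\cap Q^k_\alpha=\emptyset$; (f) $\Omega_N\setminus\bigcup_\alpha Q^k_\alpha\subset E$; (g) for $x\in Q^k_\alpha\setminus E$ and $j\ge1$ there is $Q^j_\beta\ni x$; (h) $\mu(B(x,2r)\cap Q^k_\alpha)\le c_2\,\mu(B(x,r)\cap Q^k_\alpha)$ for $x\in Q^k_\alpha\setminus E$, $r>0$; more precisely $\mu(B(x,r)\cap Q^k_\alpha)\ge c_0\mu(B(x,r))$ for $r\le\delta^k$ and $\ge c_0\mu(Q^k_\alpha)$ for $r>\delta^k$. *)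

theory Defs
  imports "HOL-Analysis.Analysis"
begin

definition qball :: "'a set \<Rightarrow> ('a \<Rightarrow> 'a \<Rightarrow> real) \<Rightarrow> 'a \<Rightarrow> real \<Rightarrow> 'a set" where
  "qball \<Omega> \<rho> x r = {y \<in> \<Omega>. \<rho> x y < r}"

definition qtop :: "'a set \<Rightarrow> ('a \<Rightarrow> 'a \<Rightarrow> real) \<Rightarrow> 'a topology" where
  "qtop \<Omega> \<rho> = topology (\<lambda>A. A \<subseteq> \<Omega> \<and> (\<forall>x\<in>A. \<exists>r>0. qball \<Omega> \<rho> x r \<subseteq> A))"

definition qbounded :: "'a set \<Rightarrow> ('a \<Rightarrow> 'a \<Rightarrow> real) \<Rightarrow> 'a set \<Rightarrow> bool" where
  "qbounded \<Omega> \<rho> S \<longleftrightarrow> (\<exists>x\<in>\<Omega>. \<exists>r. S \<subseteq> qball \<Omega> \<rho> x r)"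

definition regular_borel :: "'a topology \<Rightarrow> 'a measure \<Rightarrow> bool" where
  "regular_borel T \<mu> \<longleftrightarrow>
     space \<mu> = topspace T \<and>
     sets \<mu> = sigma_sets (topspace T) {U. openin T U} \<and>
     (\<forall>A\<in>sets \<mu>. emeasure \<mu> A = (INF U\<in>{U. openin T U \<and> A \<subseteq> U}. emeasure \<mu> U)) \<and>
     (\<forall>U. openin T U \<longrightarrow> emeasure \<mu> U = (SUP K\<in>{K. compactin T K \<and> K \<subseteq> U}. emeasure \<mu> K))"

text \<open>Locally homogeneous space (Omega, {Omega_m}_{m>=1}, rho, mu); the constants
  epsilon_m, B_m, C_m are made explicit as the functions eps, Bq, Cd.
  The index m ranges over m >= 1 (Om 0 is irrelevant).\<close>
definition loc_hom_space ::
  "'a set \<Rightarrow> (nat \<Rightarrow> 'a set) \<Rightarrow> ('a \<Rightarrow> 'a \<Rightarrow> real) \<Rightarrow> 'a measure \<Rightarrow>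
   (nat \<Rightarrow> real) \<Rightarrow> (nat \<Rightarrow> real) \<Rightarrow> (nat \<Rightarrow> real) \<Rightarrow> bool" where
  "loc_hom_space \<Omega> Om \<rho> \<mu> eps Bq Cd \<longleftrightarrow>
     (\<forall>x\<in>\<Omega>. \<forall>y\<in>\<Omega>. \<rho> x y \<ge> 0 \<and> (\<rho> x y = 0 \<longleftrightarrow> x = y) \<and> \<rho> x y = \<rho> y x) \<and>
     (\<forall>x\<in>\<Omega>. \<forall>r. openin (qtop \<Omega> \<rho>) (qball \<Omega> \<rho> x r)) \<and>
     (\<forall>x\<in>\<Omega>. \<forall>r. qtop \<Omega> \<rho> closure_of (qball \<Omega> \<rho> x r) \<subseteq> {y\<in>\<Omega>. \<rho> x y \<le> r}) \<and>
     regular_borel (qtop \<Omega> \<rho>) \<mu> \<and>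
     (\<forall>m\<ge>1. Om m \<subseteq> Om (Suc m)) \<and>
     (\<Union>m\<in>{1..}. Om m) = \<Omega> \<and>
     (\<forall>m\<ge>1.
        Om m \<in> sets \<mu> \<and>
        qbounded \<Omega> \<rho> (Om m) \<and>
        compactin (qtop \<Omega> \<rho>) (qtop \<Omega> \<rho> closure_of (Om m)) \<and>
        eps m > 0 \<and>
        {x\<in>\<Omega>. \<exists>y\<in>Om m. \<rho> x y < 2 * eps m} \<subseteq> Om (Suc m) \<and>
        Bq m \<ge> 1 \<and>
        (\<forall>x\<in>Om m. \<forall>y\<in>Om m. \<forall>z\<in>Om m. \<rho> x y \<le> Bq m * (\<rho> x z + \<rho> z y)) \<and>
        Cd m > 1 \<and>
        (\<forall>x\<in>Om m. \<forall>r. 0 < r \<and> r \<le> eps m \<longrightarrow>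
            0 < emeasure \<mu> (qball \<Omega> \<rho> x (2 * r)) \<and>
            emeasure \<mu> (qball \<Omega> \<rho> x (2 * r)) \<le> ennreal (Cd m) * emeasure \<mu> (qball \<Omega> \<rho> x r) \<and>
            emeasure \<mu> (qball \<Omega> \<rho> x r) < \<infinity>))"

text \<open>The family Delta_N = {Q k alpha : k >= 1, alpha in I k} of dyadic cubes
  subordinated to Omega_N (Bramanti--Zhu), with centres z k alpha, constants
  a0, c0, c1, c2, delta and exceptional null set E, satisfying (a)--(h).\<close>
definition dyadic_cubes ::
  "'a set \<Rightarrow> (nat \<Rightarrow> 'a set) \<Rightarrow> ('a \<Rightarrow> 'a \<Rightarrow> real) \<Rightarrow> 'a measure \<Rightarrow> (nat \<Rightarrow> real) \<Rightarrow> nat \<Rightarrow>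
   (nat \<Rightarrow> 'i set) \<Rightarrow> (nat \<Rightarrow> 'i \<Rightarrow> 'a set) \<Rightarrow> (nat \<Rightarrow> 'i \<Rightarrow> 'a) \<Rightarrow>
   real \<Rightarrow> real \<Rightarrow> real \<Rightarrow> real \<Rightarrow> real \<Rightarrow> 'a set \<Rightarrow> bool" where
  "dyadic_cubes \<Omega> Om \<rho> \<mu> eps N I Q z a0 c0 c1 c2 \<delta> E \<longleftrightarrow>
     a0 > 0 \<and> c0 > 0 \<and> c1 > 0 \<and> c2 > 0 \<and> 0 < \<delta> \<and> \<delta> < 1 \<and> c1 * \<delta> < 2 * eps (Suc N) \<and>
     E \<subseteq> Om N \<and> E \<in> null_sets \<mu> \<and>
     (\<forall>k\<ge>1. \<forall>\<alpha>\<in>I k.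
        z k \<alpha> \<in> \<Omega> \<and>
        openin (qtop \<Omega> \<rho>) (Q k \<alpha>) \<and>
        \<comment> \<open>(a)\<close>
        qball \<Omega> \<rho> (z k \<alpha>) (a0 * \<delta> ^ k) \<subseteq> Q k \<alpha> \<and>
        \<comment> \<open>(b)\<close>
        Q k \<alpha> \<subseteq> Om (Suc N) \<and>
        \<comment> \<open>(c)\<close>
        (\<forall>l. 1 \<le> l \<and> l \<le> k \<longrightarrow> (\<exists>\<beta>\<in>I l. Q k \<alpha> \<subseteq> Q l \<beta>)) \<and>
        \<comment> \<open>(d): diam (Q k alpha) < c1 delta^k, closure inside the ball, ball inside Omega_(N+2)\<close>
        (\<exists>d < c1 * \<delta> ^ k. \<forall>x\<in>Q k \<alpha>. \<forall>y\<in>Q k \<alpha>. \<rho> x y \<le> d) \<and>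
        qtop \<Omega> \<rho> closure_of (Q k \<alpha>) \<subseteq> qball \<Omega> \<rho> (z k \<alpha>) (c1 * \<delta> ^ k) \<and>
        qball \<Omega> \<rho> (z k \<alpha>) (c1 * \<delta> ^ k) \<subseteq> Om (N + 2) \<and>
        \<comment> \<open>(e)\<close>
        (\<forall>l\<ge>k. \<forall>\<beta>\<in>I l. Q l \<beta> \<subseteq> Q k \<alpha> \<or> Q l \<beta> \<inter> Q k \<alpha> = {}) \<and>
        \<comment> \<open>(g)\<close>
        (\<forall>x\<in>Q k \<alpha> - E. \<forall>j\<ge>1. \<exists>\<beta>\<in>I j. x \<in> Q j \<beta>) \<and>
        \<comment> \<open>(h)\<close>
        (\<forall>x\<in>Q k \<alpha> - E. \<forall>r>0.
           emeasure \<mu> (qball \<Omega> \<rho> x (2 * r) \<inter> Q k \<alpha>)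
             \<le> ennreal c2 * emeasure \<mu> (qball \<Omega> \<rho> x r \<inter> Q k \<alpha>) \<and>
           (r \<le> \<delta> ^ k \<longrightarrow> emeasure \<mu> (qball \<Omega> \<rho> x r \<inter> Q k \<alpha>)
                             \<ge> ennreal c0 * emeasure \<mu> (qball \<Omega> \<rho> x r)) \<and>
           (r > \<delta> ^ k \<longrightarrow> emeasure \<mu> (qball \<Omega> \<rho> x r \<inter> Q k \<alpha>)
                             \<ge> ennreal c0 * emeasure \<mu> (Q k \<alpha>)))) \<and>
     \<comment> \<open>(f)\<close>
     (\<forall>k\<ge>1. Om N - (\<Union>\<alpha>\<in>I k. Q k \<alpha>) \<subseteq> E)"

end

theory Submission
  imports Defs
begin

text \<open>Fix a generation \<open>k\<close> so fine that balls of radius comparable to \<open>\<delta>^k\<close> centred near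
  \<open>Om n\<close> stay inside \<open>Om (n+1)\<close> and lie in the doubling range of \<open>Om (n+2)\<close>. A compactness
  argument shows that there are only finitely many distinct cubes of generation \<open>k\<close>; since they
  cover \<open>Om (n+1)\<close> up to the null set \<open>E\<close>, the cubes meeting \<open>Om n\<close>, or a ball
  \<open>B(z, c1 \<delta>^k)\<close>, cover that set up to a null set. A cube meeting \<open>B(z, c1 \<delta>^k)\<close> has
  diameter below \<open>c1 \<delta>^k\<close>, so by the quasi-triangle inequality it lies in \<open>B(z, c' \<delta>^k)\<close> with
  \<open>c' = 2 B c1\<close>. Finally a finite union \<open>F\<close> of cubes is doubling: for \<open>r \<le> \<delta>^k\<close> by the
  local doubling of \<open>\<mu>\<close> and property (h) of the cube containing \<open>x\<close>, and for larger \<open>r\<close>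
  because \<open>B(x,r) \<inter> F\<close> then carries at least \<open>c0 \<mu>(Q)\<close>, a fixed fraction of \<open>\<mu>(F)\<close>.\<close>

lemma qball_mono: "r \<le> s \<Longrightarrow> qball \<Omega> \<rho> x r \<subseteq> qball \<Omega> \<rho> x s"
  unfolding qball_def by auto

lemma istopology_qball_open: "istopology (\<lambda>A. A \<subseteq> \<Omega> \<and> (\<forall>x\<in>A. \<exists>r>0. qball \<Omega> \<rho> x r \<subseteq> A))"
  unfolding istopology_def
proof (rule conjI; intro allI impI)
  fix S T assume S: "S \<subseteq> \<Omega> \<and> (\<forall>x\<in>S. \<exists>r>0. qball \<Omega> \<rho> x r \<subseteq> S)"
    and T: "T \<subseteq> \<Omega> \<and> (\<forall>x\<in>T. \<exists>r>0. qball \<Omega> \<rho> x r \<subseteq> T)"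
  show "S \<inter> T \<subseteq> \<Omega> \<and> (\<forall>x\<in>S \<inter> T. \<exists>r>0. qball \<Omega> \<rho> x r \<subseteq> S \<inter> T)"
  proof (intro conjI ballI)
    show "S \<inter> T \<subseteq> \<Omega>" using S by auto
    fix x assume "x \<in> S \<inter> T"
    then obtain r s where "r > 0" "qball \<Omega> \<rho> x r \<subseteq> S" "s > 0" "qball \<Omega> \<rho> x s \<subseteq> T"
      using S T by blast
    then show "\<exists>r>0. qball \<Omega> \<rho> x r \<subseteq> S \<inter> T"
      using qball_mono[of "min r s" r \<Omega> \<rho> x] qball_mono[of "min r s" s \<Omega> \<rho> x]
      by (intro exI[of _ "min r s"]) auto
  qed
next
  fix K :: "'a set set" assume "\<forall>K\<in>K. K \<subseteq> \<Omega> \<and> (\<forall>x\<in>K. \<exists>r>0. qball \<Omega> \<rho> x r \<subseteq> K)"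
  then show "\<Union>K \<subseteq> \<Omega> \<and> (\<forall>x\<in>\<Union>K. \<exists>r>0. qball \<Omega> \<rho> x r \<subseteq> \<Union>K)"
    by (meson Union_least Union_upper UnionE order_trans)
qed

lemma openin_qtop: "openin (qtop \<Omega> \<rho>) A \<longleftrightarrow> A \<subseteq> \<Omega> \<and> (\<forall>x\<in>A. \<exists>r>0. qball \<Omega> \<rho> x r \<subseteq> A)"
  unfolding qtop_def topology_inverse'[OF istopology_qball_open] by (rule refl)

lemma topspace_qtop: "topspace (qtop \<Omega> \<rho>) = \<Omega>"
proof -
  have "openin (qtop \<Omega> \<rho>) \<Omega>"
    unfolding openin_qtop by (auto intro!: exI[of _ 1] simp: qball_def)
  then show ?thesis
    using openin_subset unfolding topspace_def openin_qtop by blast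
qed

lemma eventually_power_small:
  fixes \<delta> C e :: real
  assumes "\<bar>\<delta>\<bar> < 1" "0 < e"
  shows "\<forall>\<^sub>F k in sequentially. C * \<delta> ^ k \<le> e"
proof -
  have "(\<lambda>k. C * \<delta> ^ k) \<longlonglongrightarrow> 0"
    by (intro tendsto_mult_right_zero LIMSEQ_power_zero) (use assms in simp)
  from order_tendstoD(2)[OF this assms(2)] show ?thesis
    by (rule eventually_mono) simp
qed

lemma ex_uniform_multiple_bound:
  fixes M :: ennreal and f :: "'b \<Rightarrow> ennreal" and c\<^sub>0 :: real
  assumes "finite B" "M < \<infinity>" "\<And>\<beta>. \<beta> \<in> B \<Longrightarrow> 0 < f \<beta>"
  shows "\<exists>c\<ge>c\<^sub>0. \<forall>\<beta>\<in>B. M \<le> ennreal c * f \<beta>"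
  using assms
proof (induction B rule: finite_induct)
  case empty
  then show ?case by auto
next
  case (insert \<beta> B)
  then obtain c where c: "c \<ge> c\<^sub>0" "\<forall>\<gamma>\<in>B. M \<le> ennreal c * f \<gamma>"
    by auto
  obtain d where d: "M \<le> ennreal d * f \<beta>"
  proof (cases "f \<beta> = \<infinity>")
    case True
    then show ?thesis using that[of 1] by simp
  next
    case False
    then obtain m where m: "f \<beta> = ennreal m" "0 < m"
      using insert.prems(2)[of \<beta>] by (cases "f \<beta>") auto
    obtain M' where M': "M = ennreal M'" "0 \<le> M'"
      using insert.prems(1) by (cases M) auto
    have "M = ennreal (M' / m) * f \<beta>"
      using m M' by (simp add: ennreal_mult[symmetric])
    then show ?thesis using that by (metis order_refl)
  qed
  have "ennreal c * f \<gamma> \<le> ennreal (max c d) * f \<gamma>" for \<gamma>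
    by (intro mult_right_mono ennreal_leI) auto
  moreover have "ennreal d * f \<beta> \<le> ennreal (max c d) * f \<beta>"
    by (intro mult_right_mono ennreal_leI) auto
  ultimately show ?case
    using c d by (intro exI[of _ "max c d"]) (auto intro: order_trans)
qed

locale locally_homogeneous_space =
  fixes \<Omega> :: "'a set" and Om :: "nat \<Rightarrow> 'a set" and \<rho> :: "'a \<Rightarrow> 'a \<Rightarrow> real"
    and \<mu> :: "'a measure" and eps Bq Cd :: "nat \<Rightarrow> real"
  assumes quasi_metric: "\<forall>x\<in>\<Omega>. \<forall>y\<in>\<Omega>. \<rho> x y \<ge> 0 \<and> (\<rho> x y = 0 \<longleftrightarrow> x = y) \<and> \<rho> x y = \<rho> y x"
    and qball_open: "\<forall>x\<in>\<Omega>. \<forall>r. openin (qtop \<Omega> \<rho>) (qball \<Omega> \<rho> x r)"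
    and closure_qball: "\<forall>x\<in>\<Omega>. \<forall>r. qtop \<Omega> \<rho> closure_of (qball \<Omega> \<rho> x r) \<subseteq> {y\<in>\<Omega>. \<rho> x y \<le> r}"
    and regular: "regular_borel (qtop \<Omega> \<rho>) \<mu>"
    and Om_Suc: "\<forall>m\<ge>1. Om m \<subseteq> Om (Suc m)"
    and Union_Om: "(\<Union>m\<in>{1..}. Om m) = \<Omega>"
    and Om_in_sets: "\<forall>m\<ge>1. Om m \<in> sets \<mu>"
    and Om_bounded: "\<forall>m\<ge>1. qbounded \<Omega> \<rho> (Om m)"
    and compactin_closure_Om: "\<forall>m\<ge>1. compactin (qtop \<Omega> \<rho>) (qtop \<Omega> \<rho> closure_of (Om m))"
    and eps_pos: "\<forall>m\<ge>1. eps m > 0"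
    and Om_neighbourhood: "\<forall>m\<ge>1. {x\<in>\<Omega>. \<exists>y\<in>Om m. \<rho> x y < 2 * eps m} \<subseteq> Om (Suc m)"
    and Bq_ge_1: "\<forall>m\<ge>1. Bq m \<ge> 1"
    and quasi_triangle: "\<forall>m\<ge>1. \<forall>x\<in>Om m. \<forall>y\<in>Om m. \<forall>z\<in>Om m. \<rho> x y \<le> Bq m * (\<rho> x z + \<rho> z y)"
    and Cd_gt_1: "\<forall>m\<ge>1. Cd m > 1"
    and local_doubling: "\<forall>m\<ge>1. \<forall>x\<in>Om m. \<forall>r. 0 < r \<and> r \<le> eps m \<longrightarrow>
            0 < emeasure \<mu> (qball \<Omega> \<rho> x (2 * r)) \<and>
            emeasure \<mu> (qball \<Omega> \<rho> x (2 * r)) \<le> ennreal (Cd m) * emeasure \<mu> (qball \<Omega> \<rho> x r) \<and>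
            emeasure \<mu> (qball \<Omega> \<rho> x r) < \<infinity>"

lemma loc_hom_space_iff:
  "loc_hom_space \<Omega> Om \<rho> \<mu> eps Bq Cd \<longleftrightarrow> locally_homogeneous_space \<Omega> Om \<rho> \<mu> eps Bq Cd"
  unfolding loc_hom_space_def locally_homogeneous_space_def
  by (simp only: all_conj_distrib imp_conjR conj_assoc)

context locally_homogeneous_space
begin

lemma dist_sym: "x \<in> \<Omega> \<Longrightarrow> y \<in> \<Omega> \<Longrightarrow> \<rho> x y = \<rho> y x"
  using quasi_metric by blast

lemma centre_in_qball: "x \<in> \<Omega> \<Longrightarrow> 0 < r \<Longrightarrow> x \<in> qball \<Omega> \<rho> x r"
  using quasi_metric[rule_format, of x x] unfolding qball_def by simp

lemma mem_qball_commute: "x \<in> \<Omega> \<Longrightarrow> y \<in> \<Omega> \<Longrightarrow> x \<in> qball \<Omega> \<rho> y r \<longleftrightarrow> y \<in> qball \<Omega> \<rho> x r"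
  using dist_sym unfolding qball_def by auto

lemma openin_in_sets: "openin (qtop \<Omega> \<rho>) U \<Longrightarrow> U \<in> sets \<mu>"
  using regular unfolding regular_borel_def by (simp add: sigma_sets.Basic)

lemma qball_in_sets: "x \<in> \<Omega> \<Longrightarrow> qball \<Omega> \<rho> x r \<in> sets \<mu>"
  using openin_in_sets qball_open by blast

lemma Om_subset: "1 \<le> m \<Longrightarrow> Om m \<subseteq> \<Omega>"
  using Union_Om by auto

lemma Om_mono:
  assumes "1 \<le> m" "m \<le> m'"
  shows "Om m \<subseteq> Om m'"
  using assms(2)
proof (induction m' rule: dec_induct)
  case (step j)
  then have "Om j \<subseteq> Om (Suc j)"
    using Om_Suc assms(1) by simp
  with step.IH show ?case by blast
qed simp

lemma doubling:
  "1 \<le> m \<Longrightarrow> x \<in> Om m \<Longrightarrow> 0 < r \<Longrightarrow> r \<le> eps m \<Longrightarrow>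
    emeasure \<mu> (qball \<Omega> \<rho> x (2 * r)) \<le> ennreal (Cd m) * emeasure \<mu> (qball \<Omega> \<rho> x r)"
  using local_doubling by blast

lemma emeasure_qball_finite:
  "1 \<le> m \<Longrightarrow> x \<in> Om m \<Longrightarrow> 0 < r \<Longrightarrow> r \<le> eps m \<Longrightarrow> emeasure \<mu> (qball \<Omega> \<rho> x r) < \<infinity>"
  using local_doubling by blast

lemma emeasure_qball_pos:
  assumes "1 \<le> m" "x \<in> Om m" "0 < r" "r \<le> 2 * eps m"
  shows "0 < emeasure \<mu> (qball \<Omega> \<rho> x r)"
proof -
  have "0 < r / 2" "r / 2 \<le> eps m"
    using assms(3,4) by auto
  then have "0 < emeasure \<mu> (qball \<Omega> \<rho> x (2 * (r / 2)))"
    using local_doubling assms(1,2) by blast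
  then show ?thesis by simp
qed

lemma qball_subset_Om_Suc:
  assumes "1 \<le> m" "x \<in> Om m" "r \<le> 2 * eps m"
  shows "qball \<Omega> \<rho> x r \<subseteq> Om (Suc m)"
proof
  fix y assume "y \<in> qball \<Omega> \<rho> x r"
  then have "y \<in> \<Omega>" "\<rho> y x < 2 * eps m"
    using assms dist_sym[of x y] Om_subset[of m] unfolding qball_def by auto
  then show "y \<in> Om (Suc m)"
    using assms Om_neighbourhood by blast
qed

lemma qball_near_Om_subset_Om_Suc:
  assumes "1 \<le> m" "Suc (Suc m) \<le> M" "x \<in> Om m" "z \<in> \<Omega>" "\<rho> x z < s"
    and "s \<le> 2 * eps m" "t \<le> 2 * eps (Suc m)" "Bq M * (t + s) \<le> 2 * eps m"
  shows "qball \<Omega> \<rho> z t \<subseteq> Om (Suc m)"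
proof
  fix y assume y: "y \<in> qball \<Omega> \<rho> z t"
  have z: "z \<in> Om (Suc m)"
    using qball_subset_Om_Suc[OF assms(1,3,6)] assms(4,5) unfolding qball_def by blast
  have y_Om: "y \<in> Om (Suc (Suc m))"
    using qball_subset_Om_Suc[OF _ z assms(7)] y by auto
  have Om_M: "Om m \<subseteq> Om M" "Om (Suc m) \<subseteq> Om M" "Om (Suc (Suc m)) \<subseteq> Om M"
    using assms(1,2) Om_mono[of m M] Om_mono[of "Suc m" M] Om_mono[of "Suc (Suc m)" M] by auto
  have yO: "y \<in> \<Omega>" and yz: "\<rho> y z < t"
    using y assms(4) dist_sym[of z y] unfolding qball_def by auto
  have "\<rho> y x \<le> Bq M * (\<rho> y z + \<rho> z x)"
    using quasi_triangle[rule_format, of M y x z] Om_M assms(1,2,3) y_Om z by auto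
  also have "\<dots> < Bq M * (t + s)"
    using yz assms(5) dist_sym[of x z] Om_subset[of m] Bq_ge_1[rule_format, of M] assms(1,2,3,4)
    by (intro mult_strict_left_mono) auto
  finally have "y \<in> qball \<Omega> \<rho> x (2 * eps m)"
    using yO assms(8) dist_sym[of x y] Om_subset[of m] assms(1,3) unfolding qball_def by auto
  then show "y \<in> Om (Suc m)"
    using qball_subset_Om_Suc[OF assms(1,3) order_refl] by blast
qed

lemma subset_qball_quasi_triangle:
  assumes "1 \<le> m" "z \<in> Om m" "y \<in> S" "S \<subseteq> Om m" "\<rho> z y < s" "\<forall>w\<in>S. \<rho> y w < s"
  shows "S \<subseteq> qball \<Omega> \<rho> z (2 * Bq m * s)"
proof
  fix w assume w: "w \<in> S"
  have "\<rho> z w \<le> Bq m * (\<rho> z y + \<rho> y w)"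
    using quasi_triangle assms w by blast
  also have "\<dots> < Bq m * (2 * s)"
    using assms w Bq_ge_1[rule_format, of m] by (intro mult_strict_left_mono) auto
  finally show "w \<in> qball \<Omega> \<rho> z (2 * Bq m * s)"
    using w assms Om_subset[of m] unfolding qball_def by auto
qed

lemma compact_finite_qball_net:
  assumes "compactin (qtop \<Omega> \<rho>) K" "0 < r"
  obtains P where "finite P" "P \<subseteq> K" "\<forall>x\<in>K. \<exists>p\<in>P. x \<in> qball \<Omega> \<rho> p r"
proof -
  have K: "K \<subseteq> \<Omega>"
    using compactin_subset_topspace[OF assms(1)] topspace_qtop by metis
  have cover: "K \<subseteq> \<Union>((\<lambda>p. qball \<Omega> \<rho> p r) ` K)"
  proof
    fix x assume "x \<in> K"
    then show "x \<in> \<Union>((\<lambda>p. qball \<Omega> \<rho> p r) ` K)"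
      using centre_in_qball[of x r] K assms(2) by blast
  qed
  have "\<And>U. U \<in> (\<lambda>p. qball \<Omega> \<rho> p r) ` K \<Longrightarrow> openin (qtop \<Omega> \<rho>) U"
    using K qball_open by blast
  then obtain \<F> where \<F>: "finite \<F>" "\<F> \<subseteq> (\<lambda>p. qball \<Omega> \<rho> p r) ` K" "K \<subseteq> \<Union>\<F>"
    using compactinD[OF assms(1) _ cover] by blast
  obtain P where P: "P \<subseteq> K" "finite P" "\<F> = (\<lambda>p. qball \<Omega> \<rho> p r) ` P"
    using finite_subset_image[OF \<F>(1,2)] by blast
  show thesis
  proof (rule that[OF P(2,1)])
    show "\<forall>x\<in>K. \<exists>p\<in>P. x \<in> qball \<Omega> \<rho> p r"
      using \<F>(3) unfolding P(3) by blast
  qed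
qed

end

locale dyadic_cube_system = locally_homogeneous_space +
  fixes N :: nat and I :: "nat \<Rightarrow> 'i set" and Q :: "nat \<Rightarrow> 'i \<Rightarrow> 'a set"
    and z :: "nat \<Rightarrow> 'i \<Rightarrow> 'a" and a0 c0 c1 c2 \<delta> :: real and E :: "'a set"
  assumes a0_pos: "a0 > 0" and c0_pos: "c0 > 0" and c1_pos: "c1 > 0" and c2_pos: "c2 > 0"
    and \<delta>_pos: "0 < \<delta>" and \<delta>_less_1: "\<delta> < 1" and c1_\<delta>_less: "c1 * \<delta> < 2 * eps (Suc N)"
    and E_subset: "E \<subseteq> Om N" and E_null: "E \<in> null_sets \<mu>"
    and centre_in_space: "\<forall>k\<ge>1. \<forall>\<alpha>\<in>I k. z k \<alpha> \<in> \<Omega>"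
    and cube_open: "\<forall>k\<ge>1. \<forall>\<alpha>\<in>I k. openin (qtop \<Omega> \<rho>) (Q k \<alpha>)"
    and qball_subset_cube: "\<forall>k\<ge>1. \<forall>\<alpha>\<in>I k. qball \<Omega> \<rho> (z k \<alpha>) (a0 * \<delta> ^ k) \<subseteq> Q k \<alpha>"
    and cube_subset_Om_Suc: "\<forall>k\<ge>1. \<forall>\<alpha>\<in>I k. Q k \<alpha> \<subseteq> Om (Suc N)"
    and cube_ancestors: "\<forall>k\<ge>1. \<forall>\<alpha>\<in>I k. \<forall>l. 1 \<le> l \<and> l \<le> k \<longrightarrow> (\<exists>\<beta>\<in>I l. Q k \<alpha> \<subseteq> Q l \<beta>)"
    and cube_diam: "\<forall>k\<ge>1. \<forall>\<alpha>\<in>I k. \<exists>d < c1 * \<delta> ^ k. \<forall>x\<in>Q k \<alpha>. \<forall>y\<in>Q k \<alpha>. \<rho> x y \<le> d"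
    and closure_cube: "\<forall>k\<ge>1. \<forall>\<alpha>\<in>I k.
          qtop \<Omega> \<rho> closure_of (Q k \<alpha>) \<subseteq> qball \<Omega> \<rho> (z k \<alpha>) (c1 * \<delta> ^ k)"
    and cube_qball_subset_Om: "\<forall>k\<ge>1. \<forall>\<alpha>\<in>I k. qball \<Omega> \<rho> (z k \<alpha>) (c1 * \<delta> ^ k) \<subseteq> Om (N + 2)"
    and cube_nested: "\<forall>k\<ge>1. \<forall>\<alpha>\<in>I k. \<forall>l\<ge>k. \<forall>\<beta>\<in>I l. Q l \<beta> \<subseteq> Q k \<alpha> \<or> Q l \<beta> \<inter> Q k \<alpha> = {}"
    and cube_points_all_generations: "\<forall>k\<ge>1. \<forall>\<alpha>\<in>I k. \<forall>x\<in>Q k \<alpha> - E. \<forall>j\<ge>1. \<exists>\<beta>\<in>I j. x \<in> Q j \<beta>"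
    and cube_relative_doubling: "\<forall>k\<ge>1. \<forall>\<alpha>\<in>I k. \<forall>x\<in>Q k \<alpha> - E. \<forall>r>0.
          emeasure \<mu> (qball \<Omega> \<rho> x (2 * r) \<inter> Q k \<alpha>) \<le> ennreal c2 * emeasure \<mu> (qball \<Omega> \<rho> x r \<inter> Q k \<alpha>)"
    and cube_lower_bound_small: "\<forall>k\<ge>1. \<forall>\<alpha>\<in>I k. \<forall>x\<in>Q k \<alpha> - E. \<forall>r>0. r \<le> \<delta> ^ k \<longrightarrow>
          emeasure \<mu> (qball \<Omega> \<rho> x r \<inter> Q k \<alpha>) \<ge> ennreal c0 * emeasure \<mu> (qball \<Omega> \<rho> x r)"
    and cube_lower_bound_large: "\<forall>k\<ge>1. \<forall>\<alpha>\<in>I k. \<forall>x\<in>Q k \<alpha> - E. \<forall>r>0. r > \<delta> ^ k \<longrightarrow>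
          emeasure \<mu> (qball \<Omega> \<rho> x r \<inter> Q k \<alpha>) \<ge> ennreal c0 * emeasure \<mu> (Q k \<alpha>)"
    and cubes_cover: "\<forall>k\<ge>1. Om N - (\<Union>\<alpha>\<in>I k. Q k \<alpha>) \<subseteq> E"

lemma dyadic_cubes_iff:
  "dyadic_cubes \<Omega> Om \<rho> \<mu> eps N I Q z a0 c0 c1 c2 \<delta> E \<longleftrightarrow>
    dyadic_cube_system_axioms \<Omega> Om \<rho> \<mu> eps N I Q z a0 c0 c1 c2 \<delta> E"
  unfolding dyadic_cubes_def dyadic_cube_system_axioms_def
  by (simp only: all_conj_distrib imp_conjR ball_conj_distrib conj_assoc)

context dyadic_cube_system
begin

lemma cube_subset_space: "1 \<le> k \<Longrightarrow> \<alpha> \<in> I k \<Longrightarrow> Q k \<alpha> \<subseteq> \<Omega>"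
  using cube_subset_Om_Suc[rule_format, of k \<alpha>] Om_subset[of "Suc N"] by simp

lemma cube_in_sets: "1 \<le> k \<Longrightarrow> \<alpha> \<in> I k \<Longrightarrow> Q k \<alpha> \<in> sets \<mu>"
  using cube_open openin_in_sets by blast

lemma centre_in_cube:
  assumes "1 \<le> k" "\<alpha> \<in> I k"
  shows "z k \<alpha> \<in> Q k \<alpha>"
proof -
  have "0 < a0 * \<delta> ^ k"
    using a0_pos \<delta>_pos by simp
  then show ?thesis
    using centre_in_qball[of "z k \<alpha>"] centre_in_space qball_subset_cube assms by blast
qed

lemma centre_in_Om_Suc: "1 \<le> k \<Longrightarrow> \<alpha> \<in> I k \<Longrightarrow> z k \<alpha> \<in> Om (Suc N)"
  using centre_in_cube cube_subset_Om_Suc by blast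

lemma cube_dist_less:
  assumes "1 \<le> k" "\<alpha> \<in> I k" "x \<in> Q k \<alpha>" "y \<in> Q k \<alpha>"
  shows "\<rho> x y < c1 * \<delta> ^ k"
proof -
  obtain d where "d < c1 * \<delta> ^ k" "\<forall>x\<in>Q k \<alpha>. \<forall>y\<in>Q k \<alpha>. \<rho> x y \<le> d"
    using cube_diam assms(1,2) by blast
  with assms(3,4) show ?thesis
    by fastforce
qed

lemma cube_subset_qball:
  assumes "1 \<le> k" "\<alpha> \<in> I k"
  shows "Q k \<alpha> \<subseteq> qball \<Omega> \<rho> (z k \<alpha>) (c1 * \<delta> ^ k)"
  using cube_dist_less[OF assms centre_in_cube[OF assms]] cube_subset_space[OF assms]
  unfolding qball_def by blast

lemma cubes_eq_or_disjoint:
  assumes "1 \<le> k" "\<alpha> \<in> I k" "\<beta> \<in> I k"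
  shows "Q k \<alpha> = Q k \<beta> \<or> Q k \<alpha> \<inter> Q k \<beta> = {}"
  using cube_nested[rule_format, OF assms(1,2) order_refl assms(3)]
    cube_nested[rule_format, OF assms(1,3) order_refl assms(2)] by blast

text \<open>Each cube of generation \<open>k\<close> contains a point of a finite \<open>a0 \<delta>^k\<close>-net of the
  compact closure of \<open>Om (Suc N)\<close>, and distinct cubes are disjoint.\<close>
lemma finite_cubes_of_generation:
  assumes "1 \<le> k"
  shows "finite (Q k ` I k)"
proof -
  let ?K = "qtop \<Omega> \<rho> closure_of Om (Suc N)"
  have K: "Om (Suc N) \<subseteq> ?K" "?K \<subseteq> \<Omega>"
    using closure_of_subset[of "Om (Suc N)" "qtop \<Omega> \<rho>"]
      closure_of_subset_topspace[of "qtop \<Omega> \<rho>" "Om (Suc N)"] Om_subset[of "Suc N"]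
    by (simp_all add: topspace_qtop)
  obtain P where P: "finite P" "P \<subseteq> ?K" "\<forall>x\<in>?K. \<exists>p\<in>P. x \<in> qball \<Omega> \<rho> p (a0 * \<delta> ^ k)"
    using compact_finite_qball_net[of ?K "a0 * \<delta> ^ k"] compactin_closure_Om a0_pos \<delta>_pos by auto
  have "\<exists>p\<in>P. p \<in> S" if S: "S \<in> Q k ` I k" for S
  proof -
    obtain \<alpha> where \<alpha>: "\<alpha> \<in> I k" "S = Q k \<alpha>"
      using S by blast
    have "z k \<alpha> \<in> Om (Suc N)"
      using centre_in_cube[OF assms \<alpha>(1)] cube_subset_Om_Suc[rule_format, OF assms \<alpha>(1)] by blast
    then have "z k \<alpha> \<in> ?K"
      using K(1) by blast
    then obtain p where "p \<in> P" "z k \<alpha> \<in> qball \<Omega> \<rho> p (a0 * \<delta> ^ k)"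
      using P(3) by blast
    moreover have "p \<in> \<Omega>" "z k \<alpha> \<in> \<Omega>"
      using \<open>p \<in> P\<close> P(2) K(2) centre_in_space assms \<alpha>(1) by auto
    ultimately show ?thesis
      using mem_qball_commute qball_subset_cube assms \<alpha> by blast
  qed
  then obtain f where f: "\<forall>S\<in>Q k ` I k. f S \<in> P \<and> f S \<in> S"
    by metis
  have "inj_on f (Q k ` I k)"
  proof (rule inj_onI)
    fix S S' assume S: "S \<in> Q k ` I k" and S': "S' \<in> Q k ` I k" and "f S = f S'"
    then have "f S \<in> S \<inter> S'"
      using f S S' by (metis IntI)
    moreover obtain \<alpha> \<beta> where "\<alpha> \<in> I k" "\<beta> \<in> I k" "S = Q k \<alpha>" "S' = Q k \<beta>"
      using S S' by blast
    ultimately show "S = S'"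
      using cubes_eq_or_disjoint[OF assms] by blast
  qed
  moreover have "f ` Q k ` I k \<subseteq> P"
    using f by blast
  ultimately show ?thesis
    using finite_imageD finite_subset P(1) by blast
qed

lemma ae_cover_by_meeting_cubes:
  assumes "1 \<le> k" "S \<subseteq> Om N" "S \<in> sets \<mu>"
  obtains B where "B \<subseteq> I k" "finite B" "\<forall>\<beta>\<in>B. Q k \<beta> \<inter> S \<noteq> {}"
    "S - (\<Union>\<beta>\<in>B. Q k \<beta>) \<in> null_sets \<mu>"
proof -
  obtain A where A: "A \<subseteq> I k" "finite A" "Q k ` I k = Q k ` A"
    using finite_subset_image[OF finite_cubes_of_generation[OF assms(1)] order_refl] by metis
  define B where "B = {\<beta>\<in>A. Q k \<beta> \<inter> S \<noteq> {}}"
  have B: "B \<subseteq> I k" "finite B"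
    using A unfolding B_def by auto
  have "S - (\<Union>\<beta>\<in>B. Q k \<beta>) \<subseteq> E"
  proof
    fix x assume x: "x \<in> S - (\<Union>\<beta>\<in>B. Q k \<beta>)"
    show "x \<in> E"
    proof (rule ccontr)
      assume "x \<notin> E"
      then have "x \<in> (\<Union>\<gamma>\<in>I k. Q k \<gamma>)"
        using cubes_cover[rule_format, OF assms(1)] assms(2) x by blast
      then obtain \<gamma> where "\<gamma> \<in> I k" "x \<in> Q k \<gamma>"
        by blast
      then obtain \<beta> where "\<beta> \<in> A" "x \<in> Q k \<beta>"
        using A(3) by (metis imageE imageI)
      then show False
        using x unfolding B_def by blast
    qed
  qed
  moreover have "S - (\<Union>\<beta>\<in>B. Q k \<beta>) \<in> sets \<mu>"
    using assms(1,3) B cube_in_sets by blast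
  ultimately have "S - (\<Union>\<beta>\<in>B. Q k \<beta>) \<in> null_sets \<mu>"
    using null_sets_subset[OF E_null] by blast
  with B that show thesis
    unfolding B_def by blast
qed


lemma emeasure_cube_pos:
  assumes "1 \<le> k" "\<alpha> \<in> I k" "a0 * \<delta> ^ k \<le> 2 * eps (Suc N)"
  shows "0 < emeasure \<mu> (Q k \<alpha>)"
proof -
  have "0 < emeasure \<mu> (qball \<Omega> \<rho> (z k \<alpha>) (a0 * \<delta> ^ k))"
    using emeasure_qball_pos[of "Suc N"] centre_in_Om_Suc assms a0_pos \<delta>_pos by simp
  also have "\<dots> \<le> emeasure \<mu> (Q k \<alpha>)"
    using qball_subset_cube cube_in_sets[OF assms(1,2)] assms(1,2) by (intro emeasure_mono) auto
  finally show ?thesis .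
qed

lemma emeasure_cube_finite:
  assumes "1 \<le> k" "\<alpha> \<in> I k" "c1 * \<delta> ^ k \<le> eps (Suc N)"
  shows "emeasure \<mu> (Q k \<alpha>) < \<infinity>"
proof -
  have "emeasure \<mu> (Q k \<alpha>) \<le> emeasure \<mu> (qball \<Omega> \<rho> (z k \<alpha>) (c1 * \<delta> ^ k))"
    using cube_subset_qball[OF assms(1,2)] qball_in_sets centre_in_space assms(1,2)
    by (intro emeasure_mono) auto
  also have "\<dots> < \<infinity>"
    using emeasure_qball_finite[of "Suc N"] centre_in_Om_Suc assms c1_pos \<delta>_pos by simp
  finally show ?thesis .
qed

text \<open>Below scale \<open>\<delta>^k\<close> the local doubling of \<open>\<mu>\<close> transfers to \<open>F\<close> through the lower
  bound (h); above it, \<open>B(x,r) \<inter> F\<close> already carries a fixed fraction of the whole of \<open>F\<close>.\<close>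
lemma doubling_at_point_of_union:
  assumes "1 \<le> k" "\<delta> ^ k \<le> eps (Suc N)" "\<beta> \<in> I k" "x \<in> Q k \<beta> - E" "Q k \<beta> \<subseteq> F" "F \<in> sets \<mu>"
    and "Cd (Suc N) / c0 \<le> c" "emeasure \<mu> F \<le> ennreal c * (ennreal c0 * emeasure \<mu> (Q k \<beta>))"
    and "0 < r"
  shows "emeasure \<mu> (qball \<Omega> \<rho> x (2 * r) \<inter> F) \<le> ennreal c * emeasure \<mu> (qball \<Omega> \<rho> x r \<inter> F)"
proof -
  have x: "x \<in> \<Omega>" "x \<in> Om (Suc N)"
    using assms(1,3,4) cube_subset_space cube_subset_Om_Suc by blast+
  have to_F: "emeasure \<mu> (qball \<Omega> \<rho> x r \<inter> Q k \<beta>) \<le> emeasure \<mu> (qball \<Omega> \<rho> x r \<inter> F)"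
    using assms(5,6) qball_in_sets[OF x(1)] by (intro emeasure_mono) auto
  show ?thesis
  proof (cases "r \<le> \<delta> ^ k")
    case True
    have "ennreal (Cd (Suc N)) = ennreal (Cd (Suc N) / c0) * ennreal c0"
      using c0_pos Cd_gt_1[rule_format, of "Suc N"] by (simp add: ennreal_mult[symmetric])
    have "emeasure \<mu> (qball \<Omega> \<rho> x (2 * r) \<inter> F) \<le> emeasure \<mu> (qball \<Omega> \<rho> x (2 * r))"
      using qball_in_sets[OF x(1)] by (intro emeasure_mono) auto
    also have "\<dots> \<le> ennreal (Cd (Suc N)) * emeasure \<mu> (qball \<Omega> \<rho> x r)"
      using doubling[of "Suc N"] x(2) assms(2,9) True by simp
    also have "\<dots> = ennreal (Cd (Suc N) / c0) * (ennreal c0 * emeasure \<mu> (qball \<Omega> \<rho> x r))"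
      using \<open>ennreal (Cd (Suc N)) = _\<close> by (simp add: mult.assoc)
    also have "\<dots> \<le> ennreal (Cd (Suc N) / c0) * emeasure \<mu> (qball \<Omega> \<rho> x r \<inter> Q k \<beta>)"
      using cube_lower_bound_small assms(1,3,4,9) True by (intro mult_left_mono) auto
    also have "\<dots> \<le> ennreal c * emeasure \<mu> (qball \<Omega> \<rho> x r \<inter> F)"
      using assms(7) to_F by (intro mult_mono ennreal_leI) auto
    finally show ?thesis .
  next
    case False
    have "emeasure \<mu> (qball \<Omega> \<rho> x (2 * r) \<inter> F) \<le> emeasure \<mu> F"
      using assms(6) by (intro emeasure_mono) auto
    also have "\<dots> \<le> ennreal c * (ennreal c0 * emeasure \<mu> (Q k \<beta>))"
      by (rule assms(8))
    also have "\<dots> \<le> ennreal c * emeasure \<mu> (qball \<Omega> \<rho> x r \<inter> Q k \<beta>)"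
      using cube_lower_bound_large assms(1,3,4,9) False by (intro mult_left_mono) auto
    also have "\<dots> \<le> ennreal c * emeasure \<mu> (qball \<Omega> \<rho> x r \<inter> F)"
      using to_F by (intro mult_left_mono) auto
    finally show ?thesis .
  qed
qed

lemma union_of_cubes_doubling:
  assumes "1 \<le> k" "\<delta> ^ k \<le> eps (Suc N)" "a0 * \<delta> ^ k \<le> 2 * eps (Suc N)" "c1 * \<delta> ^ k \<le> eps (Suc N)"
    and "B \<subseteq> I k" "finite B"
  shows "\<exists>c::real. AE x in \<mu>. x \<in> (\<Union>\<beta>\<in>B. Q k \<beta>) \<longrightarrow>
           (\<forall>r>0. emeasure \<mu> (qball \<Omega> \<rho> x (2 * r) \<inter> (\<Union>\<beta>\<in>B. Q k \<beta>))
                   \<le> ennreal c * emeasure \<mu> (qball \<Omega> \<rho> x r \<inter> (\<Union>\<beta>\<in>B. Q k \<beta>)))"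
proof -
  define F where "F = (\<Union>\<beta>\<in>B. Q k \<beta>)"
  have F_sets: "F \<in> sets \<mu>"
    unfolding F_def using assms(1,5,6) cube_in_sets by blast
  have "emeasure \<mu> F \<le> (\<Sum>\<beta>\<in>B. emeasure \<mu> (Q k \<beta>))"
    unfolding F_def using assms(1,5) cube_in_sets by (intro emeasure_subadditive_finite[OF assms(6)]) blast
  also have "\<dots> < \<infinity>"
    using emeasure_cube_finite[OF assms(1) _ assms(4)] assms(5)
      ennreal_sum_less_top[OF assms(6), of "\<lambda>\<beta>. emeasure \<mu> (Q k \<beta>)"] by (simp add: subset_iff)
  finally have "emeasure \<mu> F < \<infinity>" .
  moreover have "0 < ennreal c0 * emeasure \<mu> (Q k \<beta>)" if "\<beta> \<in> B" for \<beta>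
    using emeasure_cube_pos[of k \<beta>] c0_pos assms(1,3,5) that by (simp add: subset_iff ennreal_zero_less_mult_iff)
  ultimately obtain c where c: "Cd (Suc N) / c0 \<le> c"
    "\<forall>\<beta>\<in>B. emeasure \<mu> F \<le> ennreal c * (ennreal c0 * emeasure \<mu> (Q k \<beta>))"
    using ex_uniform_multiple_bound[OF assms(6), of "emeasure \<mu> F" "\<lambda>\<beta>. ennreal c0 * emeasure \<mu> (Q k \<beta>)"
        "Cd (Suc N) / c0"] by blast
  have "AE x in \<mu>. x \<in> F \<longrightarrow> (\<forall>r>0. emeasure \<mu> (qball \<Omega> \<rho> x (2 * r) \<inter> F)
                                     \<le> ennreal c * emeasure \<mu> (qball \<Omega> \<rho> x r \<inter> F))"
  proof (rule AE_I'[OF E_null], safe)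
    fix x and r :: real assume "x \<in> F" "x \<notin> E" "0 < r"
    then obtain \<beta> where "\<beta> \<in> B" "x \<in> Q k \<beta> - E"
      unfolding F_def by blast
    then show "emeasure \<mu> (qball \<Omega> \<rho> x (2 * r) \<inter> F) \<le> ennreal c * emeasure \<mu> (qball \<Omega> \<rho> x r \<inter> F)"
      using doubling_at_point_of_union[of k \<beta> x F c r] assms(1,2,5) F_sets c \<open>0 < r\<close>
      unfolding F_def by blast
  qed
  then show ?thesis
    unfolding F_def by blast
qed


lemma cubes_meeting_qball_subset:
  assumes "1 \<le> k" "B \<subseteq> I k" "\<forall>\<beta>\<in>B. Q k \<beta> \<inter> qball \<Omega> \<rho> x (c1 * \<delta> ^ k) \<noteq> {}"
    and "x \<in> Om (Suc N)" "2 * Bq (Suc N) * c1 \<le> c'"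
  shows "(\<Union>\<beta>\<in>B. Q k \<beta>) \<subseteq> qball \<Omega> \<rho> x (c' * \<delta> ^ k)"
proof (rule UN_least)
  fix \<beta> assume \<beta>_B: "\<beta> \<in> B"
  then have \<beta>: "\<beta> \<in> I k"
    using assms(2) by blast
  obtain y where y: "y \<in> Q k \<beta>" "y \<in> qball \<Omega> \<rho> x (c1 * \<delta> ^ k)"
    using assms(3) \<beta>_B by blast
  have "Q k \<beta> \<subseteq> qball \<Omega> \<rho> x (2 * Bq (Suc N) * (c1 * \<delta> ^ k))"
  proof (rule subset_qball_quasi_triangle[OF _ assms(4) y(1)])
    show "Q k \<beta> \<subseteq> Om (Suc N)"
      using cube_subset_Om_Suc assms(1) \<beta> by blast
    show "\<rho> x y < c1 * \<delta> ^ k"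
      using y(2) unfolding qball_def by simp
    show "\<forall>w\<in>Q k \<beta>. \<rho> y w < c1 * \<delta> ^ k"
      using cube_dist_less assms(1) \<beta> y(1) by blast
  qed simp
  also have "\<dots> \<subseteq> qball \<Omega> \<rho> x (c' * \<delta> ^ k)"
    using mult_right_mono[OF assms(5), of "\<delta> ^ k"] \<delta>_pos by (intro qball_mono) (simp add: mult.assoc)
  finally show "Q k \<beta> \<subseteq> qball \<Omega> \<rho> x (c' * \<delta> ^ k)" .
qed

lemma homogeneous_neighbourhood_of_cube:
  assumes k: "1 \<le> k" and \<alpha>: "\<alpha> \<in> I k" and m: "1 \<le> m" "m < N" and meets: "Q k \<alpha> \<inter> Om m \<noteq> {}"
    and c': "2 * Bq (Suc N) * c1 \<le> c'"
    and small: "c1 * \<delta> ^ k \<le> 2 * eps m" "c' * \<delta> ^ k \<le> 2 * eps (Suc m)"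
      "Bq (Suc N) * (c' + c1) * \<delta> ^ k \<le> 2 * eps m"
    and doubling_range: "\<delta> ^ k \<le> eps (Suc N)" "a0 * \<delta> ^ k \<le> 2 * eps (Suc N)" "c1 * \<delta> ^ k \<le> eps (Suc N)"
  shows "Q k \<alpha> \<subseteq> qball \<Omega> \<rho> (z k \<alpha>) (c1 * \<delta> ^ k) \<and>
         qball \<Omega> \<rho> (z k \<alpha>) (c1 * \<delta> ^ k) \<subseteq> Om (Suc m) \<and>
         (\<exists>B\<subseteq>I k. finite B \<and>
            qball \<Omega> \<rho> (z k \<alpha>) (c1 * \<delta> ^ k) - (\<Union>\<beta>\<in>B. Q k \<beta>) \<in> null_sets \<mu> \<and>
            (\<Union>\<beta>\<in>B. Q k \<beta>) \<subseteq> qball \<Omega> \<rho> (z k \<alpha>) (c' * \<delta> ^ k) \<and>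
            qball \<Omega> \<rho> (z k \<alpha>) (c' * \<delta> ^ k) \<subseteq> Om (Suc m) \<and>
            (\<exists>c::real. AE x in \<mu>. x \<in> (\<Union>\<beta>\<in>B. Q k \<beta>) \<longrightarrow>
               (\<forall>r>0. emeasure \<mu> (qball \<Omega> \<rho> x (2 * r) \<inter> (\<Union>\<beta>\<in>B. Q k \<beta>))
                       \<le> ennreal c * emeasure \<mu> (qball \<Omega> \<rho> x r \<inter> (\<Union>\<beta>\<in>B. Q k \<beta>)))))"
proof -
  have z: "z k \<alpha> \<in> \<Omega>" "z k \<alpha> \<in> Om (Suc N)"
    using centre_in_space[rule_format, OF k \<alpha>] centre_in_Om_Suc[OF k \<alpha>] .
  have "c1 \<le> 2 * Bq (Suc N) * c1"
    using Bq_ge_1[rule_format, of "Suc N"] c1_pos by simp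
  then have c1_c': "c1 * \<delta> ^ k \<le> c' * \<delta> ^ k"
    using c' \<delta>_pos by (intro mult_right_mono) auto
  obtain x0 where x0: "x0 \<in> Q k \<alpha>" "x0 \<in> Om m"
    using meets by blast
  have x0_near: "\<rho> x0 (z k \<alpha>) < c1 * \<delta> ^ k"
    using cube_dist_less[OF k \<alpha> x0(1) centre_in_cube[OF k \<alpha>]] .
  have big: "qball \<Omega> \<rho> (z k \<alpha>) (c' * \<delta> ^ k) \<subseteq> Om (Suc m)"
  proof (rule qball_near_Om_subset_Om_Suc[OF m(1) _ x0(2) z(1) x0_near small(1,2)])
    show "Suc (Suc m) \<le> Suc N"
      using m(2) by simp
    show "Bq (Suc N) * (c' * \<delta> ^ k + c1 * \<delta> ^ k) \<le> 2 * eps m"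
      using small(3) by (simp add: algebra_simps)
  qed
  have ball: "qball \<Omega> \<rho> (z k \<alpha>) (c1 * \<delta> ^ k) \<subseteq> Om (Suc m)"
    using big qball_mono[OF c1_c', of \<Omega> \<rho> "z k \<alpha>"] by blast
  moreover have "Om (Suc m) \<subseteq> Om N"
    using Om_mono[of "Suc m" N] m(2) by simp
  ultimately have ball_Om: "qball \<Omega> \<rho> (z k \<alpha>) (c1 * \<delta> ^ k) \<subseteq> Om N"
    by (rule order_trans)
  obtain B where B: "B \<subseteq> I k" "finite B" "\<forall>\<beta>\<in>B. Q k \<beta> \<inter> qball \<Omega> \<rho> (z k \<alpha>) (c1 * \<delta> ^ k) \<noteq> {}"
    "qball \<Omega> \<rho> (z k \<alpha>) (c1 * \<delta> ^ k) - (\<Union>\<beta>\<in>B. Q k \<beta>) \<in> null_sets \<mu>"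
    by (rule ae_cover_by_meeting_cubes[OF k ball_Om qball_in_sets[OF z(1)]])
  have "(\<Union>\<beta>\<in>B. Q k \<beta>) \<subseteq> qball \<Omega> \<rho> (z k \<alpha>) (c' * \<delta> ^ k)"
    using cubes_meeting_qball_subset[OF k B(1,3) z(2) c'] .
  then show ?thesis
    using B(1,2,4) cube_subset_qball[OF k \<alpha>] ball big union_of_cubes_doubling[OF k doubling_range B(1,2)]
    by (intro conjI exI[of _ B]) blast+
qed

end

theorem mainTheorem4:
  fixes \<Omega> :: "'a set" and Om :: "nat \<Rightarrow> 'a set" and \<rho> :: "'a \<Rightarrow> 'a \<Rightarrow> real"
    and \<mu> :: "'a measure" and eps Bq Cd :: "nat \<Rightarrow> real" and n :: nat
    and I :: "nat \<Rightarrow> 'i set" and Q :: "nat \<Rightarrow> 'i \<Rightarrow> 'a set" and z :: "nat \<Rightarrow> 'i \<Rightarrow> 'a"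
    and a0 c0 c1 c2 \<delta> :: real and E :: "'a set"
  assumes "loc_hom_space \<Omega> Om \<rho> \<mu> eps Bq Cd"
    and "n \<ge> 1"
    and "dyadic_cubes \<Omega> Om \<rho> \<mu> eps (Suc n) I Q z a0 c0 c1 c2 \<delta> E"
  shows "\<exists>c'. \<exists>K. \<forall>k\<ge>K. k \<ge> 1 \<longrightarrow>
           (\<exists>A\<subseteq>I k. finite A \<and>
              Om n - (\<Union>\<alpha>\<in>A. Q k \<alpha>) \<in> null_sets \<mu> \<and>
              (\<forall>\<alpha>\<in>A.
                 Q k \<alpha> \<subseteq> qball \<Omega> \<rho> (z k \<alpha>) (c1 * \<delta> ^ k) \<and>
                 qball \<Omega> \<rho> (z k \<alpha>) (c1 * \<delta> ^ k) \<subseteq> Om (Suc n) \<and>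
                 (\<exists>B\<subseteq>I k. finite B \<and>
                    qball \<Omega> \<rho> (z k \<alpha>) (c1 * \<delta> ^ k) - (\<Union>\<beta>\<in>B. Q k \<beta>) \<in> null_sets \<mu> \<and>
                    (\<Union>\<beta>\<in>B. Q k \<beta>) \<subseteq> qball \<Omega> \<rho> (z k \<alpha>) (c' * \<delta> ^ k) \<and>
                    qball \<Omega> \<rho> (z k \<alpha>) (c' * \<delta> ^ k) \<subseteq> Om (Suc n) \<and>
                    (\<exists>c::real. AE x in \<mu>. x \<in> (\<Union>\<beta>\<in>B. Q k \<beta>) \<longrightarrow>
                       (\<forall>r>0. emeasure \<mu> (qball \<Omega> \<rho> x (2 * r) \<inter> (\<Union>\<beta>\<in>B. Q k \<beta>))
                               \<le> ennreal c * emeasure \<mu> (qball \<Omega> \<rho> x r \<inter> (\<Union>\<beta>\<in>B. Q k \<beta>)))))))"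
proof -
  interpret dyadic_cube_system \<Omega> Om \<rho> \<mu> eps Bq Cd "Suc n" I Q z a0 c0 c1 c2 \<delta> E
    using assms(1,3) by (intro dyadic_cube_system.intro) (simp_all add: loc_hom_space_iff dyadic_cubes_iff)
  define c' where "c' = 2 * Bq (Suc (Suc n)) * c1"
  define small_scale where "small_scale k \<longleftrightarrow> c1 * \<delta> ^ k \<le> 2 * eps n \<and> c' * \<delta> ^ k \<le> 2 * eps (Suc n) \<and>
      Bq (Suc (Suc n)) * (c' + c1) * \<delta> ^ k \<le> 2 * eps n \<and> 1 * \<delta> ^ k \<le> eps (Suc (Suc n)) \<and>
      a0 * \<delta> ^ k \<le> 2 * eps (Suc (Suc n)) \<and> c1 * \<delta> ^ k \<le> eps (Suc (Suc n))" for k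
  have "\<forall>\<^sub>F k in sequentially. small_scale k"
    unfolding small_scale_def using eps_pos assms(2) \<delta>_pos \<delta>_less_1
    by (intro eventually_conj eventually_power_small) auto
  then obtain K where K: "\<And>k. K \<le> k \<Longrightarrow> small_scale k"
    unfolding eventually_sequentially by blast
  have c': "2 * Bq (Suc (Suc n)) * c1 \<le> c'"
    unfolding c'_def by simp
  show ?thesis
  proof (intro exI[of _ c'] exI[of _ K] allI impI, goal_cases)
    case (1 k)
    have Om_n: "Om n \<subseteq> Om (Suc n)" "Om n \<in> sets \<mu>"
      using Om_mono[of n "Suc n"] Om_in_sets assms(2) by simp_all
    obtain A where A: "A \<subseteq> I k" "finite A" "\<forall>\<alpha>\<in>A. Q k \<alpha> \<inter> Om n \<noteq> {}"
      "Om n - (\<Union>\<alpha>\<in>A. Q k \<alpha>) \<in> null_sets \<mu>"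
      by (rule ae_cover_by_meeting_cubes[OF \<open>1 \<le> k\<close> Om_n])
    with K[OF 1(1)] show ?case
      unfolding small_scale_def
      by (intro exI[of _ A] ballI homogeneous_neighbourhood_of_cube[OF 1(2) _ assms(2) lessI _ c'] conjI)
        auto
  qed
qed

end
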